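(* Let $V$ be a vertex algebra and $a\in V$. Then: (1) $a_0a_0\cdots a_0a\in C_2(V)$ (for any positive number of factors $a_0$); (2) if $n_1,\dots,n_t\in\{0,-1\}$ and the number $k$ of indices $i$ with $n_i=-1$ satisfies $k<t$, then $a_{n_1}a_{n_2}\cdots a_{n_t}a\equiv \underbrace{a_{-1}\cdots a_{-1}}_{k}\underbrace{a_0\cdots a_0}_{t-k}a\equiv 0 \pmod{C_2(V)}$.
   Context: A vertex algebra $(V,Y,\mathbf{1})$ is over $\mathbb{C}$; for $u\in V$ write $Y(u,z)=\sum_{n\in\mathbb{Z}}u_nz^{-n-1}$ with $u_n\in\operatorname{End}V$. Iterated products are nested to the right: $a_{n_1}a_{n_2}\cdots a_{n_t}a=a_{n_1}(a_{n_2}(\cdots(a_{n_t}a)))$. $C_2(V)=\operatorname{span}_{\mathbb{C}}\{u_{-2}v: u,v\in V\}$. *)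

theory Defs
  imports Complex_Main
begin

text \<open>Y u n v denotes the component u_n v, i.e.
  Y(u,z) v = sum_n (Y u n v) z^(-n-1).  The axioms are: bilinearity, truncation,
  vacuum and creation axioms, and the Jacobi identity written in components
  (Borcherds identity).  The sums in the Borcherds identity are finite by truncation;
  fsum sums over the (finite) support.\<close>

definition fsum :: "(nat \<Rightarrow> 'v::ab_group_add) \<Rightarrow> 'v" where
  "fsum f = sum f {i. f i \<noteq> 0}"

definition vertex_algebra ::
  "(complex \<Rightarrow> 'v::ab_group_add \<Rightarrow> 'v) \<Rightarrow> ('v \<Rightarrow> int \<Rightarrow> 'v \<Rightarrow> 'v) \<Rightarrow> 'v \<Rightarrow> bool" where
  "vertex_algebra scale Y vac \<longleftrightarrow>
     module scale \<and>
     (\<forall>u u' n v. Y (u + u') n v = Y u n v + Y u' n v) \<and>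
     (\<forall>c u n v. Y (scale c u) n v = scale c (Y u n v)) \<and>
     (\<forall>u n v v'. Y u n (v + v') = Y u n v + Y u n v') \<and>
     (\<forall>c u n v. Y u n (scale c v) = scale c (Y u n v)) \<and>
     (\<forall>u v. \<exists>N. \<forall>n\<ge>N. Y u n v = 0) \<and>
     (\<forall>n v. Y vac n v = (if n = -1 then v else 0)) \<and>
     (\<forall>u n. n \<ge> 0 \<longrightarrow> Y u n vac = 0) \<and>
     (\<forall>u. Y u (-1) vac = u) \<and>
     (\<forall>u v w p q r.
        fsum (\<lambda>i. scale (of_int p gchoose i) (Y (Y u (r + int i) v) (p + q - int i) w)) =
        fsum (\<lambda>i. scale ((-1) ^ i * (of_int r gchoose i))
                    (Y u (p + r - int i) (Y v (q + int i) w)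
                     - scale ((-1) powi r) (Y v (q + r - int i) (Y u (p + int i) w)))))"

definition C2 :: "(complex \<Rightarrow> 'v::ab_group_add \<Rightarrow> 'v) \<Rightarrow> ('v \<Rightarrow> int \<Rightarrow> 'v \<Rightarrow> 'v) \<Rightarrow> 'v set" where
  "C2 scale Y = module.span scale {Y u (-2) v | u v. True}"

definition iter_prod :: "('v \<Rightarrow> int \<Rightarrow> 'v \<Rightarrow> 'v) \<Rightarrow> 'v \<Rightarrow> int list \<Rightarrow> 'v" where
  "iter_prod Y a ns = foldr (\<lambda>n x. Y a n x) ns a"

end

theory Submission
  imports Defs
begin

text \<open>
  Write \<open>D u = u_{-2} 1\<close> for the translation operator. The Borcherds identity gives
  \<open>(D u)_{-n} = n u_{-n-1}\<close>, so by induction every \<open>u_m v\<close> with \<open>m <= -2\<close> lies in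
  \<open>C_2(V)\<close>. Combined with the commutator formula, this makes \<open>C_2(V)\<close> stable under
  left multiplication by any \<open>u_p\<close> with \<open>p <= 0\<close> and under \<open>x \<mapsto> x_{-1} w\<close>.
  Skew symmetry gives \<open>u_0 v = -v_0 u\<close> modulo \<open>C_2(V)\<close>, hence \<open>a_0 a \<in> C_2(V)\<close>.
  Since \<open>a_0\<close> is a derivation of the \<open>(-1)\<close>-product, also \<open>a_0 a_{-1} ... a_{-1} a \<in> C_2(V)\<close>,
  and every product \<open>a_{n_1} ... a_{n_t} a\<close> with all \<open>n_i \<in> {0,-1}\<close> and some \<open>n_i = 0\<close>
  arises from such an element by further left multiplications.
\<close>

lemma fsum_eq_sum:
  assumes "finite S" and "\<And>i. i \<notin> S \<Longrightarrow> f i = 0"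
  shows "fsum f = sum f S"
  unfolding fsum_def using assms by (intro sum.mono_neutral_left) auto

lemma fsum_single:
  assumes "\<And>i. i \<noteq> j \<Longrightarrow> f i = 0"
  shows "fsum f = f j"
  using fsum_eq_sum[of "{j}" f] assms by auto

lemma fsum_split:
  assumes "finite {i. f i \<noteq> 0}"
  shows "fsum f = f j + fsum (f(j := 0))"
proof -
  let ?S = "{i. f i \<noteq> 0} - {j}"
  have "fsum f = sum f (insert j ?S)"
    using assms by (intro fsum_eq_sum) auto
  also have "\<dots> = f j + sum f ?S"
    using assms by (intro sum.insert) auto
  also have "sum f ?S = sum (f(j := 0)) ?S"
    by (intro sum.cong) auto
  also have "\<dots> = fsum (f(j := 0))"
    using assms by (intro fsum_eq_sum[symmetric]) auto
  finally show ?thesis .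
qed

lemma gbinomial_minus_two:
  "(-1) ^ k * ((-2 :: 'a :: field_char_0) gchoose k) = of_nat (k + 1)"
proof -
  have "(-2 :: 'a) gchoose k = (-1) ^ k * (of_nat (Suc k) gchoose k)"
    by (subst gbinomial_negated_upper) (simp add: algebra_simps)
  also have "(of_nat (Suc k) :: 'a) gchoose k = of_nat (Suc k choose k)"
    by (simp only: binomial_gbinomial)
  finally show ?thesis
    by simp
qed

lemma iter_prod_Nil [simp]: "iter_prod Y a [] = a"
  by (simp add: iter_prod_def)

lemma iter_prod_Cons [simp]: "iter_prod Y a (n # ns) = Y a n (iter_prod Y a ns)"
  by (simp add: iter_prod_def)

locale vertex_alg =
  fixes scale :: "complex \<Rightarrow> 'v::ab_group_add \<Rightarrow> 'v"
    and Y :: "'v \<Rightarrow> int \<Rightarrow> 'v \<Rightarrow> 'v"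
    and vac :: 'v
  assumes vertex_algebra: "vertex_algebra scale Y vac"
begin

sublocale module scale
  using vertex_algebra unfolding vertex_algebra_def by blast

lemma
  shows Y_add_left: "Y (u + u') n v = Y u n v + Y u' n v"
    and Y_scale_left: "Y (scale c u) n v = scale c (Y u n v)"
    and Y_add_right: "Y u n (v + v') = Y u n v + Y u n v'"
    and Y_scale_right: "Y u n (scale c v) = scale c (Y u n v)"
    and Y_truncation: "\<exists>N. \<forall>n\<ge>N. Y u n v = 0"
    and Y_vacuum_left: "Y vac n v = (if n = -1 then v else 0)"
    and Y_vacuum_right: "n \<ge> 0 \<Longrightarrow> Y u n vac = 0"
    and creation: "Y u (-1) vac = u"
    and borcherds:
      "fsum (\<lambda>i. scale (of_int p gchoose i) (Y (Y u (r + int i) v) (p + q - int i) w)) =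
       fsum (\<lambda>i. scale ((-1) ^ i * (of_int r gchoose i))
                   (Y u (p + r - int i) (Y v (q + int i) w)
                    - scale ((-1) powi r) (Y v (q + r - int i) (Y u (p + int i) w))))"
  using vertex_algebra unfolding vertex_algebra_def by (simp_all only:)

lemma Y_zero_left [simp]: "Y 0 n v = 0"
  using Y_add_left[of 0 0 n v] by simp

lemma Y_zero_right [simp]: "Y u n 0 = 0"
  using Y_add_right[of u n 0 0] by simp

lemma commutator_formula:
  "fsum (\<lambda>i. scale (of_int p gchoose i) (Y (Y u (int i) v) (p + q - int i) w)) =
   Y u p (Y v q w) - Y v q (Y u p w)"
proof -
  have "fsum (\<lambda>i. scale ((-1) ^ i * (of_int 0 gchoose i))
                   (Y u (p + 0 - int i) (Y v (q + int i) w)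
                    - scale ((-1) powi 0) (Y v (q + 0 - int i) (Y u (p + int i) w)))) =
        Y u p (Y v q w) - Y v q (Y u p w)"
    by (subst fsum_single[where j = 0]) (auto simp: gbinomial_0_left)
  then show ?thesis
    using borcherds[of p u 0 v q w] by simp
qed

lemma iterate_formula:
  "Y (Y u r v) q w =
   fsum (\<lambda>i. scale ((-1) ^ i * (of_int r gchoose i))
               (Y u (r - int i) (Y v (q + int i) w)
                - scale ((-1) powi r) (Y v (q + r - int i) (Y u (int i) w))))"
proof -
  have "fsum (\<lambda>i. scale (of_int 0 gchoose i) (Y (Y u (r + int i) v) (0 + q - int i) w)) =
        Y (Y u r v) q w"
    by (subst fsum_single[where j = 0]) (auto simp: gbinomial_0_left)
  then show ?thesis
    using borcherds[of 0 u r v q w] by simp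
qed

lemma zero_mode_commutator: "Y u 0 (Y v q w) = Y (Y u 0 v) q w + Y v q (Y u 0 w)"
proof -
  have "fsum (\<lambda>i. scale (of_int 0 gchoose i) (Y (Y u (int i) v) (0 + q - int i) w)) =
        Y (Y u 0 v) q w"
    by (subst fsum_single[where j = 0]) (auto simp: gbinomial_0_left)
  then show ?thesis
    using commutator_formula[of 0 u v q w] by (simp add: algebra_simps)
qed

lemma Y_translation_mode:
  assumes "n \<ge> 1"
  shows "Y (Y u (-2) vac) (- int n) w = scale (of_nat n) (Y u (- int (Suc n)) w)"
proof -
  have index: "-2 - int (n - 1) = - int (Suc n)"
    using assms by simp
  have "Y (Y u (-2) vac) (- int n) w =
        scale ((-1) ^ (n - 1) * (of_int (-2) gchoose (n - 1))) (Y u (-2 - int (n - 1)) w)"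
    using assms by (subst iterate_formula, subst fsum_single[where j = "n - 1"]) (auto simp: Y_vacuum_left)
  also have "\<dots> = scale (of_nat n) (Y u (- int (Suc n)) w)"
    unfolding index using assms gbinomial_minus_two[of "n - 1", where 'a = complex] by simp
  finally show ?thesis .
qed

lemma subspace_C2: "subspace (C2 scale Y)"
  unfolding C2_def by simp

lemma C2_generator: "Y u (-2) v \<in> C2 scale Y"
  unfolding C2_def by (rule span_base) blast

lemma fsum_in_C2: "(\<And>i. f i \<in> C2 scale Y) \<Longrightarrow> fsum f \<in> C2 scale Y"
  unfolding fsum_def by (rule subspace_sum[OF subspace_C2])

lemma C2_closed_under_linear_map:
  assumes add: "\<And>x y. f (x + y) = f x + f y"
    and homogeneous: "\<And>c x. f (scale c x) = scale c (f x)"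
    and generators: "\<And>u v. f (Y u (-2) v) \<in> C2 scale Y"
    and x: "x \<in> C2 scale Y"
  shows "f x \<in> C2 scale Y"
proof -
  have "f 0 = 0"
    using add[of 0 0] by simp
  then have "subspace {x. f x \<in> C2 scale Y}"
    using subspace_C2 by (auto simp: subspace_def add homogeneous)
  then have "C2 scale Y \<subseteq> {x. f x \<in> C2 scale Y}"
    using generators unfolding C2_def by (intro span_minimal) auto
  then show ?thesis
    using x by blast
qed

lemma Y_mode_le_minus_two_in_C2:
  assumes "m \<le> -2"
  shows "Y u m v \<in> C2 scale Y"
proof -
  have "Y u (- int n) v \<in> C2 scale Y" if "n \<ge> 2" for n
    using that
  proof (induction n arbitrary: u v rule: nat_induct_at_least)
    case base
    show ?case
      using C2_generator by simp
  next
    case (Suc n)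
    have "Y u (- int (Suc n)) v = scale (1 / of_nat n) (Y (Y u (-2) vac) (- int n) v)"
      using Y_translation_mode[of n u v] Suc.hyps by simp
    then show ?case
      using Suc.IH subspace_scale[OF subspace_C2] by simp
  qed
  from this[of "nat (- m)"] assms show ?thesis
    by simp
qed

lemma C2_left_ideal:
  assumes "p \<le> 0" and "x \<in> C2 scale Y"
  shows "Y u p x \<in> C2 scale Y"
  using Y_add_right Y_scale_right _ assms(2)
proof (rule C2_closed_under_linear_map)
  fix v w
  have "Y u p (Y v (-2) w) - Y v (-2) (Y u p w) =
        fsum (\<lambda>i. scale (of_int p gchoose i) (Y (Y u (int i) v) (p + -2 - int i) w))"
    by (rule commutator_formula[symmetric])
  also have "\<dots> \<in> C2 scale Y"
    using assms(1) by (intro fsum_in_C2 subspace_scale[OF subspace_C2] Y_mode_le_minus_two_in_C2) simp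
  finally show "Y u p (Y v (-2) w) \<in> C2 scale Y"
    using C2_generator subspace_add[OF subspace_C2] by (metis diff_add_cancel)
qed

lemma C2_right_ideal_minus_one:
  assumes "x \<in> C2 scale Y"
  shows "Y x (-1) w \<in> C2 scale Y"
  using Y_add_left Y_scale_left _ assms
proof (rule C2_closed_under_linear_map[where f = "\<lambda>x. Y x (-1) w"])
  fix u v
  show "Y (Y u (-2) v) (-1) w \<in> C2 scale Y"
    by (subst iterate_formula)
      (intro fsum_in_C2 subspace_scale[OF subspace_C2] subspace_diff[OF subspace_C2]
        Y_mode_le_minus_two_in_C2; simp)
qed

lemma finite_nonzero_modes: "finite {i :: nat. Y u (int i) v \<noteq> 0}"
proof -
  obtain N where "\<forall>n\<ge>N. Y u n v = 0"
    using Y_truncation by blast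
  then have "{i :: nat. Y u (int i) v \<noteq> 0} \<subseteq> {..<nat N}"
    by (auto simp: not_le zless_nat_eq_int_zless)
  then show ?thesis
    by (rule finite_subset) simp
qed

text \<open>The commutator formula for \<open>[u_{-1}, v_0]\<close> applied to the vacuum reads
  \<open>sum_i (-1)^i (u_i v)_{-1-i} 1 = -v_0 u\<close>, and the terms with \<open>i >= 1\<close> have mode \<open><= -2\<close>.\<close>

lemma skew_symmetry_zero_mode_mod_C2: "Y u 0 v + Y v 0 u \<in> C2 scale Y"
proof -
  define f where "f i = scale (of_int (-1) gchoose i) (Y (Y u (int i) v) (-1 + 0 - int i) vac)" for i
  have "fsum f = Y u (-1) (Y v 0 vac) - Y v 0 (Y u (-1) vac)"
    unfolding f_def by (rule commutator_formula)
  also have "\<dots> = - Y v 0 u"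
    by (simp add: Y_vacuum_right creation)
  finally have "fsum f = - Y v 0 u" .
  moreover have "finite {i. f i \<noteq> 0}"
    by (rule finite_subset[OF _ finite_nonzero_modes[of u v]]) (auto simp: f_def)
  moreover have "f 0 = Y u 0 v"
    by (simp add: f_def creation)
  ultimately have "Y u 0 v + Y v 0 u = - fsum (f(0 := 0))"
    using fsum_split[of f 0] by (simp add: algebra_simps eq_neg_iff_add_eq_0)
  moreover have "fsum (f(0 := 0)) \<in> C2 scale Y"
    by (intro fsum_in_C2)
      (auto simp: f_def subspace_0[OF subspace_C2]
        intro!: subspace_scale[OF subspace_C2] Y_mode_le_minus_two_in_C2)
  ultimately show ?thesis
    by (simp add: subspace_neg[OF subspace_C2])
qed

lemma zero_mode_self_in_C2: "Y a 0 a \<in> C2 scale Y"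
proof -
  have "Y a 0 a + Y a 0 a = scale 2 (Y a 0 a)"
    by (metis scale_left_distrib scale_one one_add_one)
  then have "Y a 0 a = scale (1 / 2) (Y a 0 a + Y a 0 a)"
    by simp
  then show ?thesis
    using skew_symmetry_zero_mode_mod_C2[of a a] subspace_scale[OF subspace_C2] by metis
qed

lemma zero_mode_of_minus_one_products_in_C2:
  "Y a 0 (iter_prod Y a (replicate s (-1))) \<in> C2 scale Y"
proof (induction s)
  case 0
  show ?case
    using zero_mode_self_in_C2 by simp
next
  case (Suc s)
  let ?x = "iter_prod Y a (replicate s (-1))"
  have "Y a 0 (Y a (-1) ?x) = Y (Y a 0 a) (-1) ?x + Y a (-1) (Y a 0 ?x)"
    by (rule zero_mode_commutator)
  moreover have "Y (Y a 0 a) (-1) ?x \<in> C2 scale Y"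
    using zero_mode_self_in_C2 by (rule C2_right_ideal_minus_one)
  moreover have "Y a (-1) (Y a 0 ?x) \<in> C2 scale Y"
    by (rule C2_left_ideal[OF _ Suc.IH]) simp
  ultimately show ?case
    by (simp add: subspace_add[OF subspace_C2])
qed

lemma iter_prod_in_C2:
  assumes "set ns \<subseteq> {0, -1}" and "0 \<in> set ns"
  shows "iter_prod Y a ns \<in> C2 scale Y"
  using assms
proof (induction ns)
  case Nil
  then show ?case
    by simp
next
  case (Cons n ns)
  show ?case
  proof (cases "0 \<in> set ns")
    case True
    then show ?thesis
      using Cons by (auto intro: C2_left_ideal)
  next
    case False
    with Cons.prems have "n = 0" and "\<forall>x\<in>set ns. x = -1"
      by auto
    then show ?thesis
      using zero_mode_of_minus_one_products_in_C2[where s = "length ns"]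
      by (simp add: replicate_length_same)
  qed
qed

end

theorem mainTheorem2:
  fixes scale :: "complex \<Rightarrow> 'v::ab_group_add \<Rightarrow> 'v"
    and Y :: "'v \<Rightarrow> int \<Rightarrow> 'v \<Rightarrow> 'v" and vac :: 'v and a :: 'v
  assumes "vertex_algebra scale Y vac"
  shows "(\<forall>m::nat. m \<ge> 1 \<longrightarrow> iter_prod Y a (replicate m 0) \<in> C2 scale Y) \<and>
         (\<forall>ns::int list. set ns \<subseteq> {0, -1} \<longrightarrow>
            length (filter (\<lambda>n. n = -1) ns) < length ns \<longrightarrow>
            (let k = length (filter (\<lambda>n. n = -1) ns);
                 b = iter_prod Y a (replicate k (-1) @ replicate (length ns - k) 0)
             in iter_prod Y a ns - b \<in> C2 scale Y \<and> b \<in> C2 scale Y))"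
proof -
  interpret vertex_alg scale Y vac
    using assms by unfold_locales
  have in_C2: "iter_prod Y a ns \<in> C2 scale Y"
    if "set ns \<subseteq> {0, -1}" and "length (filter (\<lambda>n. n = -1) ns) < length ns" for ns
  proof (rule iter_prod_in_C2)
    show "0 \<in> set ns"
    proof (rule ccontr)
      assume "0 \<notin> set ns"
      with that(1) have "filter (\<lambda>n. n = -1) ns = ns"
        by (auto simp: filter_id_conv)
      with that(2) show False
        by simp
    qed
  qed (fact that(1))
  show ?thesis
    by (auto simp: Let_def intro!: in_C2 subspace_diff[OF subspace_C2])
qed

end
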